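(* Let $T$ be a tournament in which every vertex lies in some triangle, and let $w:V(T)\to\mathbb{Q}_{\ge0}$. Suppose there is an optimal solution $x$ of $\min\{\sum_v w(v)x_v : x\in P(T)\}$ with $x_v<1/2$ for all $v\in V(T)$. Then $\mathrm{SA}_0(T,w)=\min\{\sum_v w(v)x_v: x\in P(T)\}=w(V(T))/3$.
   Context: A triangle of a tournament $T$ is a set $\{a,b,c\}\subseteq V(T)$ inducing a directed 3-cycle; $\triangle(T)$ is the set of triangles. The basic relaxation is $P(T)=\{x\in[0,1]^{V(T)}: x_a+x_b+x_c\ge 1\ \forall\{a,b,c\}\in\triangle(T)\}$ and $\mathrm{SA}_0(T,w)=\min\{\sum_v w(v)x_v: x\in P(T)\}$. $w(V(T))=\sum_{v}w(v)$. *)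

theory Defs
  imports Complex_Main
begin

definition tournament :: "'a set \<Rightarrow> ('a \<Rightarrow> 'a \<Rightarrow> bool) \<Rightarrow> bool" where
  "tournament V A \<longleftrightarrow> finite V \<and>
     (\<forall>u v. A u v \<longrightarrow> u \<in> V \<and> v \<in> V) \<and>
     (\<forall>v\<in>V. \<not> A v v) \<and>
     (\<forall>u\<in>V. \<forall>v\<in>V. u \<noteq> v \<longrightarrow> (A u v \<longleftrightarrow> \<not> A v u))"

definition triangles :: "'a set \<Rightarrow> ('a \<Rightarrow> 'a \<Rightarrow> bool) \<Rightarrow> 'a set set" where
  "triangles V A = {{a, b, c} | a b c. a \<in> V \<and> b \<in> V \<and> c \<in> V \<and>
      a \<noteq> b \<and> b \<noteq> c \<and> a \<noteq> c \<and> A a b \<and> A b c \<and> A c a}"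

text \<open>The basic relaxation P(T); only the values on V matter.\<close>
definition PT :: "'a set \<Rightarrow> ('a \<Rightarrow> 'a \<Rightarrow> bool) \<Rightarrow> ('a \<Rightarrow> real) set" where
  "PT V A = {x. (\<forall>v\<in>V. 0 \<le> x v \<and> x v \<le> 1) \<and>
      (\<forall>t\<in>triangles V A. (\<Sum>v\<in>t. x v) \<ge> 1)}"

definition SA0 :: "'a set \<Rightarrow> ('a \<Rightarrow> 'a \<Rightarrow> bool) \<Rightarrow> ('a \<Rightarrow> real) \<Rightarrow> real" where
  "SA0 V A w = Inf ((\<lambda>x. \<Sum>v\<in>V. w v * x v) ` PT V A)"

end

theory Submission
  imports Defs
begin

text \<open>Since every vertex lies in a triangle and all values of \<open>x\<close> are below \<open>1/2\<close>, the triangle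
  inequalities force \<open>x > 0\<close>. Then moving from the point \<open>1/3\<close> through \<open>x\<close> a little beyond it,
  to \<open>(1 + e) x - e/3\<close>, stays in \<open>P(T)\<close>, because every triangle sum becomes \<open>(1 + e) s - e \<ge> 1\<close>.
  Optimality of \<open>x\<close> along this line gives \<open>w\<cdot>x \<ge> w(V)/3\<close>, and the feasible constant point \<open>1/3\<close>
  gives the reverse inequality.\<close>

lemma triangle_subset_card:
  assumes "t \<in> triangles V A"
  shows "t \<subseteq> V" "card t = 3"
  using assms unfolding triangles_def by auto

lemma triangle_vertex_pos:
  assumes "x \<in> PT V A" "t \<in> triangles V A" "v \<in> t" "\<forall>u\<in>t. x u < 1/2"
  shows "0 < x v"
proof -
  have fin: "finite t" using triangle_subset_card(2)[OF assms(2)] by (simp add: card_ge_0_finite)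
  have "card (t - {v}) = 2" using triangle_subset_card(2)[OF assms(2)] assms(3) by simp
  hence "t - {v} \<noteq> {}" by (metis card.empty zero_neq_numeral)
  hence "(\<Sum>u\<in>t - {v}. x u) < (\<Sum>u\<in>t - {v}. 1/2)"
    using assms(4) fin by (intro sum_strict_mono) auto
  also have "\<dots> = 1" using \<open>card (t - {v}) = 2\<close> by simp
  also have "1 \<le> (\<Sum>u\<in>t. x u)" using assms(1,2) unfolding PT_def by blast
  also have "\<dots> = x v + (\<Sum>u\<in>t - {v}. x u)" using fin assms(3) by (rule sum.remove)
  finally show ?thesis by simp
qed

lemma const_third_in_PT: "(\<lambda>_. 1/3) \<in> PT V A"
  unfolding PT_def by (auto dest: triangle_subset_card(2))

lemma stretch_in_PT:
  fixes e :: real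
  assumes "x \<in> PT V A" "0 \<le> e" "e \<le> 3" "\<forall>v\<in>V. e/3 \<le> x v \<and> x v \<le> 1/2"
  shows "(\<lambda>v. (1 + e) * x v - e/3) \<in> PT V A"
  unfolding PT_def
proof (intro CollectI conjI ballI)
  fix v assume "v \<in> V"
  with assms(4) have "e/3 \<le> x v" "x v \<le> 1/2" by auto
  moreover have "e * x v \<le> e * (1/2)" using \<open>x v \<le> 1/2\<close> assms(2) by (rule mult_left_mono)
  moreover have "0 \<le> e * x v" using assms(2) \<open>e/3 \<le> x v\<close> by simp
  ultimately show "0 \<le> (1 + e) * x v - e/3" "(1 + e) * x v - e/3 \<le> 1"
    using assms(3) by (simp_all add: algebra_simps)
next
  fix t assume t: "t \<in> triangles V A"
  have s: "1 \<le> (\<Sum>v\<in>t. x v)" using assms(1) t unfolding PT_def by blast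
  have "(\<Sum>v\<in>t. (1 + e) * x v - e/3) = (1 + e) * (\<Sum>v\<in>t. x v) - e"
    using triangle_subset_card(2)[OF t] by (simp add: sum_subtractf sum_distrib_left)
  also have "\<dots> \<ge> 1" using mult_left_mono[OF s assms(2)] s by (simp add: algebra_simps)
  finally show "1 \<le> (\<Sum>v\<in>t. (1 + e) * x v - e/3)" .
qed

lemma SA0_eq_optimum:
  assumes "x \<in> PT V A" "\<forall>y\<in>PT V A. (\<Sum>v\<in>V. w v * x v) \<le> (\<Sum>v\<in>V. w v * y v)"
  shows "SA0 V A w = (\<Sum>v\<in>V. w v * x v)"
  unfolding SA0_def using assms by (intro cInf_eq_minimum) auto

lemma positive_optimum_ge_third:
  assumes "finite V" "x \<in> PT V A" "\<forall>v\<in>V. 0 < x v \<and> x v \<le> 1/2"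
    and "\<forall>y\<in>PT V A. (\<Sum>v\<in>V. w v * x v) \<le> (\<Sum>v\<in>V. w v * y v)"
  shows "(\<Sum>v\<in>V. w v) / 3 \<le> (\<Sum>v\<in>V. w v * x v)"
proof -
  define e where "e = Min (insert 1 (x ` V))"
  have "0 < e" "e \<le> 1" using assms(1,3) by (auto simp: e_def)
  have "e \<le> x v" if "v \<in> V" for v using assms(1) that by (simp add: e_def)
  hence "(\<lambda>v. (1 + e) * x v - e/3) \<in> PT V A"
    using assms(2,3) \<open>0 < e\<close> \<open>e \<le> 1\<close> by (intro stretch_in_PT) force+
  from bspec[OF assms(4) this]
  have "(\<Sum>v\<in>V. w v * x v) \<le> (\<Sum>v\<in>V. w v * ((1 + e) * x v - e/3))" by simp
  also have "\<dots> = (1 + e) * (\<Sum>v\<in>V. w v * x v) - e * ((\<Sum>v\<in>V. w v) / 3)"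
    by (simp add: algebra_simps sum_subtractf sum_distrib_left sum_divide_distrib)
  finally have "e * ((\<Sum>v\<in>V. w v) / 3) \<le> e * (\<Sum>v\<in>V. w v * x v)" by (simp add: algebra_simps)
  thus ?thesis using \<open>0 < e\<close> by simp
qed

theorem mainTheorem12:
  fixes V :: "'a set" and A :: "'a \<Rightarrow> 'a \<Rightarrow> bool"
    and w :: "'a \<Rightarrow> real" and x :: "'a \<Rightarrow> real"
  assumes "tournament V A"
    and "\<forall>v\<in>V. \<exists>t\<in>triangles V A. v \<in> t"
    and "\<forall>v\<in>V. w v \<in> \<rat> \<and> w v \<ge> 0"
    and "x \<in> PT V A"
    and "\<forall>y\<in>PT V A. (\<Sum>v\<in>V. w v * x v) \<le> (\<Sum>v\<in>V. w v * y v)"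
    and "\<forall>v\<in>V. x v < 1/2"
  shows "SA0 V A w = (\<Sum>v\<in>V. w v * x v) \<and> SA0 V A w = (\<Sum>v\<in>V. w v) / 3"
proof -
  have "finite V" using assms(1) unfolding tournament_def by blast
  have "0 < x v" if "v \<in> V" for v
  proof -
    obtain t where t: "t \<in> triangles V A" "v \<in> t" using assms(2) \<open>v \<in> V\<close> by blast
    then show ?thesis
      using assms(6) triangle_subset_card(1)[OF t(1)] by (intro triangle_vertex_pos[OF assms(4) t]) auto
  qed
  hence lower: "(\<Sum>v\<in>V. w v) / 3 \<le> (\<Sum>v\<in>V. w v * x v)"
    using assms(4-6) \<open>finite V\<close> by (intro positive_optimum_ge_third) force+
  have "(\<Sum>v\<in>V. w v * x v) \<le> (\<Sum>v\<in>V. w v * (1/3))"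
    using bspec[OF assms(5) const_third_in_PT] by simp
  hence "(\<Sum>v\<in>V. w v * x v) \<le> (\<Sum>v\<in>V. w v) / 3" by (simp add: sum_divide_distrib)
  with lower show ?thesis using SA0_eq_optimum[OF assms(4,5)] by linarith
qed

end
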